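(* Let $n$ be odd and suppose $q=18n^2+1$ is a prime power. Let $x$ be a primitive $(3n)$-th root of unity in $\mathbb F_q$, and let $Y=(y_0,y_1,\dots,y_{3n-1})$ be a complete system of representatives for the cosets of $C^{3n}$ in $\mathbb F_q^*$ such that $\sum_{i=0}^{3n-1}y_i=0$, $\sum_{i=0}^{3n-1}x^iy_i=0$ and $\sum_{i=0}^{3n-1}x^{-i}y_i=0$. Then there exists a $(9n^2,3n;4)$ Heffter net.
   Context: $C^{3n}$ denotes the subgroup of index $3n$ of $\mathbb F_q^*$ (the nonzero $3n$-th powers). A half-set of an abelian group $G$ of odd order $2v+1\ge7$ is a subset $V\subseteq G\setminus\{0\}$ containing exactly one element of each pair $\{g,-g\}$, $g\ne0$. A $(v,k)$ Heffter system on $V$ is a partition of $V$ into blocks of size $k$ each summing to $0$ in $G$. A $(k^2,k;r)$ Heffter net is a partial linear space (any two distinct points lie in at most one block) whose point set is a half-set $V$ of an abelian group of order $2k^2+1$, with a resolution of its blocks into $r$ parallel classes (each a partition of $V$), each of which is a $(k^2,k)$ Heffter system. *)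

theory Defs
  imports "HOL-Algebra.Algebra"
begin

text \<open>Abelian groups are HOL-Algebra commutative groups; the group operation
  \<otimes> plays the role of +, \<one> of 0, inv of negation, finprod of the sum.\<close>

definition half_set :: "('g, 'b) monoid_scheme \<Rightarrow> 'g set \<Rightarrow> bool" where
  "half_set G V \<longleftrightarrow> V \<subseteq> carrier G - {\<one>\<^bsub>G\<^esub>} \<and>
     (\<forall>g \<in> carrier G - {\<one>\<^bsub>G\<^esub>}. (g \<in> V \<longleftrightarrow> inv\<^bsub>G\<^esub> g \<notin> V))"

definition heffter_system :: "('g, 'b) monoid_scheme \<Rightarrow> nat \<Rightarrow> 'g set \<Rightarrow> 'g set set \<Rightarrow> bool" where
  "heffter_system G k V P \<longleftrightarrow>
     (\<forall>B \<in> P. B \<subseteq> V \<and> card B = k \<and> finprod G (\<lambda>x. x) B = \<one>\<^bsub>G\<^esub>) \<and>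
     \<Union>P = V \<and>
     (\<forall>B \<in> P. \<forall>B' \<in> P. B \<noteq> B' \<longrightarrow> B \<inter> B' = {})"

definition heffter_net :: "('g, 'b) monoid_scheme \<Rightarrow> nat \<Rightarrow> nat \<Rightarrow> 'g set \<Rightarrow> (nat \<Rightarrow> 'g set set) \<Rightarrow> bool" where
  "heffter_net G k r V Pc \<longleftrightarrow>
     comm_group G \<and> finite (carrier G) \<and> order G = 2 * k^2 + 1 \<and>
     half_set G V \<and>
     (\<forall>i < r. heffter_system G k V (Pc i)) \<and>
     (\<forall>i < r. \<forall>j < r. i \<noteq> j \<longrightarrow> Pc i \<inter> Pc j = {}) \<and>
     (\<forall>B \<in> (\<Union>i<r. Pc i). \<forall>B' \<in> (\<Union>i<r. Pc i). B \<noteq> B' \<longrightarrow> card (B \<inter> B') \<le> 1)"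

definition nz_powers :: "nat \<Rightarrow> 'a::field set" where
  "nz_powers m = {z ^ m | z. z \<noteq> 0}"

definition mult_cosets :: "'a::field set \<Rightarrow> 'a set set" where
  "mult_cosets C = {(\<lambda>c. a * c) ` C | a. a \<noteq> 0}"

end

theory Submission
  imports Defs "HOL-Computational_Algebra.Polynomial"
begin

text \<open>Write m = 3n and let \<mu> be the group of m-th roots of unity, generated by x. Since
  q - 1 = 2m^2 and m is odd, C^m = \<plusminus>\<mu>, so every nonzero element of F_q is uniquely
  s \<zeta> y_i with s = \<plusminus>1, \<zeta> \<in> \<mu>, i < m, and the points \<zeta> y_i form a half-set.
  For each slope t \<in> {1, x, x^-1} the lines {\<zeta> t^i y_i | i < m}, \<zeta> \<in> \<mu>, form a
  parallel class whose blocks sum to \<zeta> \<Sum> t^i y_i = 0; the columns \<mu> y_i form a fourth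
  one, with sums (\<Sum>\<mu>) y_i = 0. Lines of slopes t \<noteq> u through a common point at indices
  i < j force (t/u)^(j-i) = 1, impossible as t/u has order m; a line meets each column
  once.\<close>

lemma card_roots_of_unity_le:
  assumes "m > 0"
  shows "card {z :: 'a::{comm_ring_1,ring_no_zero_divisors}. z ^ m = 1} \<le> m"
proof -
  let ?p = "monom (1::'a) m + [:-1:]"
  have deg: "degree ?p = m"
    using assms by (subst degree_add_eq_left) (auto simp: degree_monom_eq)
  then have "?p \<noteq> 0"
    using assms by auto
  moreover have "{z. poly ?p z = 0} = {z :: 'a. z ^ m = 1}"
    by (simp add: poly_monom)
  ultimately show ?thesis
    using card_poly_roots_bound[of ?p] deg by simp
qed

lemma finite_field_power_card_minus_one:
  fixes z :: "'a::{field,finite}"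
  assumes "z \<noteq> 0"
  shows "z ^ (card (UNIV :: 'a set) - 1) = 1"
proof -
  have "(\<Prod>u\<in>UNIV-{0}. z * u) = (\<Prod>u\<in>UNIV-{0::'a}. u)"
    by (rule prod.reindex_bij_witness[of _ "\<lambda>u. u / z" "\<lambda>u. z * u"]) (use assms in auto)
  moreover have "card (UNIV - {0::'a}) = card (UNIV :: 'a set) - 1"
    by (simp add: card_Diff_singleton)
  ultimately show ?thesis
    by (simp add: prod.distrib)
qed

definition additive_group :: "'a::ab_group_add monoid" where
  "additive_group = \<lparr>carrier = UNIV, monoid.mult = (+), monoid.one = 0\<rparr>"

lemma additive_group_simps [simp]:
  "carrier additive_group = UNIV"
  "a \<otimes>\<^bsub>additive_group\<^esub> b = a + b"
  "\<one>\<^bsub>additive_group\<^esub> = 0"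
  by (simp_all add: additive_group_def)

lemma comm_group_additive_group: "comm_group additive_group"
  by (rule comm_groupI) (auto simp: add.commute intro: exI[of _ "- _"])

lemma inv_additive_group [simp]: "inv\<^bsub>additive_group\<^esub> g = - g"
  by (rule group.inv_equality[OF comm_group.axioms(2)[OF comm_group_additive_group]])
    auto

lemma finprod_additive_group [simp]: "finprod additive_group f B = sum f B"
proof (cases "finite B")
  case True
  interpret comm_group additive_group
    by (rule comm_group_additive_group)
  from True show ?thesis
    by (induction B rule: finite_induct) auto
next
  case False
  then show ?thesis
    using comm_monoid.finprod_infinite[OF comm_group.axioms(1)[OF comm_group_additive_group]]
    by simp
qed

lemma half_set_additive_group_iff:
  "half_set additive_group V \<longleftrightarrow> 0 \<notin> V \<and> (\<forall>g. g \<noteq> 0 \<longrightarrow> (g \<in> V \<longleftrightarrow> - g \<notin> V))"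
  by (auto simp: half_set_def)

lemma heffter_system_additive_group_iff:
  "heffter_system additive_group k V P \<longleftrightarrow>
     (\<forall>B \<in> P. B \<subseteq> V \<and> card B = k \<and> \<Sum>B = 0) \<and> \<Union>P = V \<and>
     (\<forall>B \<in> P. \<forall>B' \<in> P. B \<noteq> B' \<longrightarrow> B \<inter> B' = {})"
  by (simp add: heffter_system_def)

lemma one_in_nz_powers: "(1::'a::field) \<in> nz_powers k"
  unfolding nz_powers_def by (rule CollectI, rule exI[of _ 1]) simp

lemma mem_coset_of_representative:
  fixes y :: "nat \<Rightarrow> 'a::field"
  assumes "(\<lambda>i. (\<lambda>c. y i * c) ` C) ` I = mult_cosets C" "1 \<in> C" "g \<noteq> 0"
  shows "\<exists>i\<in>I. g \<in> (\<lambda>c. y i * c) ` C"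
proof -
  have "(\<lambda>c. g * c) ` C \<in> mult_cosets C"
    using assms(3) unfolding mult_cosets_def by blast
  then obtain i where "i \<in> I" "(\<lambda>c. g * c) ` C = (\<lambda>c. y i * c) ` C"
    using assms(1) by blast
  moreover have "g \<in> (\<lambda>c. g * c) ` C"
    using assms(2) by (rule rev_image_eqI) simp
  ultimately show ?thesis
    by auto
qed

locale heffter_net_construction =
  fixes m :: nat and x :: "'a::{field,finite}" and y :: "nat \<Rightarrow> 'a"
  assumes odd_m: "odd m"
    and card_field: "card (UNIV :: 'a set) = 2 * m^2 + 1"
    and x_pow_m: "x ^ m = 1"
    and x_primitive: "\<And>j. 0 < j \<Longrightarrow> j < m \<Longrightarrow> x ^ j \<noteq> 1"
    and y_nonzero: "\<And>i. i < m \<Longrightarrow> y i \<noteq> 0"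
    and y_meets_cosets: "\<And>g. g \<noteq> 0 \<Longrightarrow> \<exists>i<m. g \<in> (\<lambda>c. y i * c) ` nz_powers m"
    and sum_y: "(\<Sum>i<m. y i) = 0"
    and sum_x_pow_y: "(\<Sum>i<m. x ^ i * y i) = 0"
    and sum_inverse_x_pow_y: "(\<Sum>i<m. inverse x ^ i * y i) = 0"
begin

lemma m_ge_3: "m \<ge> 3"
proof -
  have "m \<noteq> 1"
    using sum_y y_nonzero[of 0] by auto
  then show ?thesis
    using odd_m by presburger
qed

lemma x_nonzero: "x \<noteq> 0"
  using x_pow_m m_ge_3 by (cases m) auto

lemma x_pow_eq_one_iff: "x ^ k = 1 \<longleftrightarrow> m dvd k"
proof -
  have "x ^ k = (x ^ m) ^ (k div m) * x ^ (k mod m)"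
    by (simp flip: power_mult power_add)
  then have "x ^ k = x ^ (k mod m)"
    using x_pow_m by simp
  then show ?thesis
    using x_primitive[of "k mod m"] m_ge_3 by (auto simp: dvd_eq_mod_eq_0)
qed

lemma inj_on_x_pow: "inj_on (\<lambda>j. x ^ j) {..<m}"
proof -
  have "j = j'" if "j \<le> j'" "j' < m" "x ^ j = x ^ j'" for j j'
  proof -
    have "x ^ j * x ^ (j' - j) = x ^ j * 1"
      using that by (metis le_add_diff_inverse mult_1_right power_add)
    then have "m dvd j' - j"
      using x_nonzero by (simp add: x_pow_eq_one_iff)
    then show ?thesis
      using that by (auto dest!: dvd_imp_le)
  qed
  then show ?thesis
    by (metis inj_onI lessThan_iff nat_le_linear)
qed

definition roots :: "'a set" where
  "roots = {z. z ^ m = 1}"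

lemma roots_power: "\<zeta> \<in> roots \<Longrightarrow> \<zeta> ^ k \<in> roots"
  by (auto simp: roots_def simp flip: power_mult) (metis mult.commute power_mult power_one)

lemma x_in_roots: "x \<in> roots"
  by (simp add: roots_def x_pow_m)

lemma roots_eq_x_powers: "roots = (\<lambda>j. x ^ j) ` {..<m}"
proof -
  have powers_subset: "(\<lambda>j. x ^ j) ` {..<m} \<subseteq> roots"
    using x_in_roots roots_power by blast
  have "card roots \<le> m"
    unfolding roots_def using m_ge_3 by (intro card_roots_of_unity_le) simp
  then have "card ((\<lambda>j. x ^ j) ` {..<m}) = card roots"
    using card_mono[OF finite powers_subset] by (simp add: card_image[OF inj_on_x_pow])
  then show ?thesis
    using powers_subset by (intro card_subset_eq[symmetric]) simp_all
qed

lemma card_roots: "card roots = m"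
  by (simp add: roots_eq_x_powers card_image[OF inj_on_x_pow])

lemma roots_nonzero: "\<zeta> \<in> roots \<Longrightarrow> \<zeta> \<noteq> 0"
  using m_ge_3 by (auto simp: roots_def power_0_left)

lemma roots_mult: "\<zeta> \<in> roots \<Longrightarrow> \<eta> \<in> roots \<Longrightarrow> \<zeta> * \<eta> \<in> roots"
  by (simp add: roots_def power_mult_distrib)

lemma roots_inverse: "\<zeta> \<in> roots \<Longrightarrow> inverse \<zeta> \<in> roots"
  by (simp add: roots_def power_inverse)

lemma sum_roots: "\<Sum>roots = 0"
proof -
  have "x \<noteq> 1"
    using x_pow_eq_one_iff[of 1] m_ge_3 by auto
  then have "(\<Sum>j<m. x ^ j) = 0"
    by (simp add: sum_gp_strict x_pow_m)
  then show ?thesis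
    by (simp add: roots_eq_x_powers sum.reindex[OF inj_on_x_pow])
qed

lemma nz_powers_subset_signed_roots: "nz_powers m \<subseteq> roots \<union> uminus ` roots"
proof
  fix c :: 'a
  assume "c \<in> nz_powers m"
  then obtain z where "z \<noteq> 0" and c: "c = z ^ m"
    by (auto simp: nz_powers_def)
  then have "c ^ m * c ^ m = 1"
    using finite_field_power_card_minus_one[of z]
    by (simp add: card_field power2_eq_square mult_2 flip: power_mult power_add)
  then have "(c ^ m - 1) * (c ^ m + 1) = 0"
    by (simp add: algebra_simps)
  then consider "c ^ m = 1" | "(- c) ^ m = 1"
    using odd_m by (auto simp: neg_eq_iff_add_eq_0)
  then show "c \<in> roots \<union> uminus ` roots"
    by cases (auto simp: roots_def intro: image_eqI[of _ _ "- c"])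
qed

lemma nonzero_eq_signed_point:
  assumes "g \<noteq> 0"
  obtains s \<zeta> i where "s \<in> {1, -1}" "\<zeta> \<in> roots" "i < m" "g = s * \<zeta> * y i"
proof -
  obtain i c where "i < m" "c \<in> nz_powers m" and g: "g = y i * c"
    using y_meets_cosets[OF assms] by blast
  then consider "c \<in> roots" | \<zeta> where "\<zeta> \<in> roots" "c = - \<zeta>"
    using nz_powers_subset_signed_roots by blast
  then show ?thesis
  proof cases
    case 1
    then show ?thesis
      using that[of 1 c i] \<open>i < m\<close> g by (simp add: mult.commute)
  next
    case 2
    then show ?thesis
      using that[of "-1" \<zeta> i] \<open>i < m\<close> g by (simp add: mult.commute)
  qed
qed

text \<open>The map is onto the 2 m^2 nonzero elements and its domain has at most 2 m^2
  elements, with equality only if 1 \<noteq> -1; so the characteristic cannot be 2.\<close>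
lemma bij_betw_signed_points:
  "bij_betw (\<lambda>(s, \<zeta>, i). s * \<zeta> * y i) ({1, -1} \<times> roots \<times> {..<m}) (UNIV - {0})"
  and one_neq_minus_one: "(1::'a) \<noteq> -1"
proof -
  let ?f = "\<lambda>(s, \<zeta>, i). s * \<zeta> * y i" and ?D = "{1, -1::'a} \<times> roots \<times> {..<m}"
  have image: "?f ` ?D = UNIV - {0}"
  proof
    show "?f ` ?D \<subseteq> UNIV - {0}"
      using roots_nonzero y_nonzero by auto
    show "UNIV - {0} \<subseteq> ?f ` ?D"
    proof
      fix g :: 'a
      assume "g \<in> UNIV - {0}"
      then obtain s \<zeta> i where "s \<in> {1, -1}" "\<zeta> \<in> roots" "i < m" "g = s * \<zeta> * y i"
        using nonzero_eq_signed_point by blast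
      then show "g \<in> ?f ` ?D"
        by (auto intro!: image_eqI[of _ _ "(s, \<zeta>, i)"])
    qed
  qed
  have card_nonzero: "card (UNIV - {0::'a}) = 2 * m * m"
    by (simp add: card_Diff_singleton card_field power2_eq_square)
  have card_D: "card ?D = card {1, -1::'a} * (m * m)"
    by (simp add: card_cartesian_product card_roots)
  have "card (?f ` ?D) \<le> card ?D"
    by (rule card_image_le) simp
  then show "(1::'a) \<noteq> -1"
  proof (intro notI)
    assume "(1::'a) = -1"
    then have "card {1, -1::'a} = 1"
      by (simp only: flip: \<open>(1::'a) = -1\<close>) simp
    then have "card ?D = m * m"
      using card_D by simp
    then show False
      using \<open>card (?f ` ?D) \<le> card ?D\<close> image card_nonzero m_ge_3 by simp
  qed
  then have "card ?D = card (UNIV - {0::'a})"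
    using card_D card_nonzero by simp
  then show "bij_betw ?f ?D (UNIV - {0})"
    using image by (simp add: bij_betw_def eq_card_imp_inj_on)
qed

lemma point_eq_iff:
  assumes "\<zeta> \<in> roots" "\<zeta>' \<in> roots" "i < m" "i' < m"
  shows "\<zeta> * y i = \<zeta>' * y i' \<longleftrightarrow> \<zeta> = \<zeta>' \<and> i = i'"
proof
  assume "\<zeta> * y i = \<zeta>' * y i'"
  then have "(1::'a, \<zeta>, i) = (1, \<zeta>', i')"
    using assms by (intro inj_onD[OF bij_betw_imp_inj_on[OF bij_betw_signed_points]]) auto
  then show "\<zeta> = \<zeta>' \<and> i = i'"
    by simp
qed simp

lemma point_neq_minus_point:
  assumes "\<zeta> \<in> roots" "\<zeta>' \<in> roots" "i < m" "i' < m"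
  shows "\<zeta> * y i \<noteq> - (\<zeta>' * y i')"
proof
  assume "\<zeta> * y i = - (\<zeta>' * y i')"
  then have "(1::'a, \<zeta>, i) = (-1, \<zeta>', i')"
    using assms by (intro inj_onD[OF bij_betw_imp_inj_on[OF bij_betw_signed_points]]) auto
  then show False
    using one_neq_minus_one by simp
qed

definition points :: "'a set" where
  "points = {\<zeta> * y i | \<zeta> i. \<zeta> \<in> roots \<and> i < m}"

lemma half_set_points: "half_set additive_group points"
  unfolding half_set_additive_group_iff
proof (intro conjI allI impI)
  show "0 \<notin> points"
    using roots_nonzero y_nonzero by (auto simp: points_def)
  have point: "\<zeta> * y i \<in> points" if "\<zeta> \<in> roots" "i < m" for \<zeta> i
    using that by (auto simp: points_def)
  have minus_point: "- (\<zeta> * y i) \<notin> points" if "\<zeta> \<in> roots" "i < m" for \<zeta> i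
  proof
    assume "- (\<zeta> * y i) \<in> points"
    then obtain \<zeta>' i' where "\<zeta>' \<in> roots" "i' < m" "- (\<zeta> * y i) = \<zeta>' * y i'"
      by (auto simp: points_def)
    then show False
      using point_neq_minus_point[of \<zeta>' \<zeta> i' i] that by simp
  qed
  fix g :: 'a
  assume "g \<noteq> 0"
  then obtain s \<zeta> i where "s \<in> {1, -1}" "\<zeta> \<in> roots" "i < m" and g: "g = s * \<zeta> * y i"
    by (rule nonzero_eq_signed_point)
  then consider "g = \<zeta> * y i" | "g = - (\<zeta> * y i)"
    by auto
  then show "g \<in> points \<longleftrightarrow> - g \<notin> points"
    using point minus_point \<open>\<zeta> \<in> roots\<close> \<open>i < m\<close> by cases auto
qed

definition slopes :: "'a set" where
  "slopes = {1, x, inverse x}"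

lemma slopes_subset_roots: "slopes \<subseteq> roots"
  using x_in_roots roots_inverse by (auto simp: slopes_def roots_def)

text \<open>The quotient of two distinct slopes is x^e or x^-e with e \<in> {1, 2}; since m is odd,
  it has order m.\<close>
lemma slopes_pow_eq_imp_dvd:
  assumes "t \<in> slopes" "u \<in> slopes" "t \<noteq> u" "t ^ k = u ^ k"
  shows "m dvd k"
proof -
  have "t / u \<in> {x ^ 1, inverse (x ^ 1), x ^ 2, inverse (x ^ 2)}"
    using assms(1-3) by (auto simp: slopes_def divide_inverse power2_eq_square)
  then obtain e :: nat where "e \<in> {1, 2}" and quotient: "t / u = x ^ e \<or> t / u = inverse (x ^ e)"
    by blast
  have "u \<noteq> 0"
    using assms(2) slopes_subset_roots roots_nonzero by blast
  then have "(t / u) ^ k = 1"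
    using assms(4) by (simp add: power_divide)
  then have "x ^ (e * k) = 1"
    using quotient by (auto simp: power_mult power_inverse)
  then have "m dvd e * k"
    by (simp add: x_pow_eq_one_iff)
  moreover have "coprime m e"
    using \<open>e \<in> {1, 2}\<close> odd_m by auto
  ultimately show ?thesis
    by (simp add: coprime_dvd_mult_right_iff)
qed

definition line :: "'a \<Rightarrow> 'a \<Rightarrow> 'a set" where
  "line t \<zeta> = (\<lambda>i. \<zeta> * t ^ i * y i) ` {..<m}"

definition column :: "nat \<Rightarrow> 'a set" where
  "column i = (\<lambda>\<zeta>. \<zeta> * y i) ` roots"

lemma line_coefficient_in_roots: "t \<in> slopes \<Longrightarrow> \<zeta> \<in> roots \<Longrightarrow> \<zeta> * t ^ i \<in> roots"
  using slopes_subset_roots by (blast intro: roots_mult roots_power)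

lemma inj_on_line:
  assumes "t \<in> slopes" "\<zeta> \<in> roots"
  shows "inj_on (\<lambda>i. \<zeta> * t ^ i * y i) {..<m}"
  using assms line_coefficient_in_roots point_eq_iff by (auto intro!: inj_onI)

lemma line_subset_points: "t \<in> slopes \<Longrightarrow> \<zeta> \<in> roots \<Longrightarrow> line t \<zeta> \<subseteq> points"
  using line_coefficient_in_roots by (fastforce simp: line_def points_def)

lemma card_line: "t \<in> slopes \<Longrightarrow> \<zeta> \<in> roots \<Longrightarrow> card (line t \<zeta>) = m"
  by (simp add: line_def card_image inj_on_line)

lemma sum_line:
  assumes "t \<in> slopes" "\<zeta> \<in> roots"
  shows "\<Sum>(line t \<zeta>) = 0"
proof -
  have "\<Sum>(line t \<zeta>) = (\<Sum>i<m. \<zeta> * t ^ i * y i)"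
    unfolding line_def by (rule sum.reindex_cong[OF inj_on_line[OF assms]]) simp_all
  also have "\<dots> = \<zeta> * (\<Sum>i<m. t ^ i * y i)"
    by (simp add: sum_distrib_left mult.assoc)
  also have "(\<Sum>i<m. t ^ i * y i) = 0"
    using assms(1) sum_y sum_x_pow_y sum_inverse_x_pow_y by (auto simp: slopes_def)
  finally show ?thesis
    by simp
qed

lemma point_in_line:
  assumes "t \<in> slopes" "\<zeta> \<in> roots" "i < m"
  shows "\<zeta> * y i \<in> line t (\<zeta> * inverse (t ^ i))"
proof -
  have "t \<noteq> 0"
    using assms(1) slopes_subset_roots roots_nonzero by blast
  then show ?thesis
    using assms(3) by (auto simp: line_def intro!: image_eqI[of _ _ i])
qed

lemma lines_disjoint:
  assumes "t \<in> slopes" "\<zeta> \<in> roots" "\<eta> \<in> roots" "\<zeta> \<noteq> \<eta>"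
  shows "line t \<zeta> \<inter> line t \<eta> = {}"
proof -
  have "\<zeta> * t ^ i \<noteq> \<eta> * t ^ i" for i
    using assms slopes_subset_roots roots_nonzero by auto
  then show ?thesis
    using assms point_eq_iff line_coefficient_in_roots by (fastforce simp: line_def)
qed

lemma inj_on_column: "i < m \<Longrightarrow> inj_on (\<lambda>\<zeta>. \<zeta> * y i) roots"
  using y_nonzero by (auto intro!: inj_onI)

lemma column_subset_points: "i < m \<Longrightarrow> column i \<subseteq> points"
  by (auto simp: column_def points_def)

lemma card_column: "i < m \<Longrightarrow> card (column i) = m"
  by (simp add: column_def card_image inj_on_column card_roots)

lemma sum_column: "i < m \<Longrightarrow> \<Sum>(column i) = 0"
  by (simp add: column_def sum.reindex inj_on_column flip: sum_distrib_right) (simp add: sum_roots)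

lemma columns_disjoint: "i < m \<Longrightarrow> i' < m \<Longrightarrow> i \<noteq> i' \<Longrightarrow> column i \<inter> column i' = {}"
  using point_eq_iff by (fastforce simp: column_def)

lemma line_Int_line_index:
  assumes "t \<in> slopes" "u \<in> slopes" "\<zeta> \<in> roots" "\<eta> \<in> roots"
    and "p \<in> line t \<zeta> \<inter> line u \<eta>"
  obtains i where "i < m" "p = \<zeta> * t ^ i * y i" "\<zeta> * t ^ i = \<eta> * u ^ i"
proof -
  obtain i j where "i < m" "j < m" "p = \<zeta> * t ^ i * y i" "p = \<eta> * u ^ j * y j"
    using assms(5) by (auto simp: line_def)
  moreover from this have "\<zeta> * t ^ i = \<eta> * u ^ j \<and> i = j"
    using assms(1-4) line_coefficient_in_roots point_eq_iff by metis
  ultimately show ?thesis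
    using that by blast
qed

lemma card_line_Int_line_le:
  assumes "t \<in> slopes" "u \<in> slopes" "t \<noteq> u" "\<zeta> \<in> roots" "\<eta> \<in> roots"
  shows "card (line t \<zeta> \<inter> line u \<eta>) \<le> 1"
proof -
  have same_index: "i = j"
    if "i \<le> j" "j < m" "\<zeta> * t ^ i = \<eta> * u ^ i" "\<zeta> * t ^ j = \<eta> * u ^ j" for i j
  proof -
    have split_power: "v ^ j = v ^ i * v ^ (j - i)" for v :: 'a
      using \<open>i \<le> j\<close> by (simp flip: power_add)
    have "\<zeta> * t ^ i * t ^ (j - i) = \<zeta> * t ^ i * u ^ (j - i)"
      using that(3,4) split_power[of t] split_power[of u] by (metis mult.assoc)
    moreover have "\<zeta> * t ^ i \<noteq> 0"
      using assms(1,4) line_coefficient_in_roots roots_nonzero by blast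
    ultimately have "t ^ (j - i) = u ^ (j - i)"
      using mult_left_cancel by blast
    then have "m dvd j - i"
      by (rule slopes_pow_eq_imp_dvd[OF assms(1-3)])
    then show ?thesis
      using that by (auto dest!: dvd_imp_le)
  qed
  have "p = q" if p: "p \<in> line t \<zeta> \<inter> line u \<eta>" and q: "q \<in> line t \<zeta> \<inter> line u \<eta>" for p q
  proof -
    obtain i where "i < m" "p = \<zeta> * t ^ i * y i" "\<zeta> * t ^ i = \<eta> * u ^ i"
      using line_Int_line_index[OF assms(1,2,4,5) p] .
    moreover obtain j where "j < m" "q = \<zeta> * t ^ j * y j" "\<zeta> * t ^ j = \<eta> * u ^ j"
      using line_Int_line_index[OF assms(1,2,4,5) q] .
    ultimately show ?thesis
      using same_index by (metis nat_le_linear)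
  qed
  then show ?thesis
    by (simp add: card_le_Suc0_iff_eq)
qed

lemma card_line_Int_column_le:
  assumes "t \<in> slopes" "\<zeta> \<in> roots" "i < m"
  shows "card (line t \<zeta> \<inter> column i) \<le> 1"
proof -
  have "p = \<zeta> * t ^ i * y i" if "p \<in> line t \<zeta> \<inter> column i" for p
    using that assms line_coefficient_in_roots point_eq_iff
    by (auto simp: line_def column_def)
  then show ?thesis
    by (auto simp: card_le_Suc0_iff_eq)
qed

definition line_class :: "'a \<Rightarrow> 'a set set" where
  "line_class t = line t ` roots"

definition column_class :: "'a set set" where
  "column_class = column ` {..<m}"

lemma heffter_system_line_class:
  assumes "t \<in> slopes"
  shows "heffter_system additive_group m points (line_class t)"
  unfolding heffter_system_additive_group_iff line_class_def
proof (intro conjI)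
  show "\<forall>B \<in> line t ` roots. B \<subseteq> points \<and> card B = m \<and> \<Sum>B = 0"
    using assms line_subset_points card_line sum_line by blast
next
  have "points \<subseteq> \<Union>(line t ` roots)"
  proof
    fix p
    assume "p \<in> points"
    then obtain \<zeta> i where "\<zeta> \<in> roots" "i < m" "p = \<zeta> * y i"
      by (auto simp: points_def)
    moreover have "\<zeta> * inverse (t ^ i) \<in> roots"
      using \<open>\<zeta> \<in> roots\<close> assms slopes_subset_roots by (blast intro: roots_mult roots_inverse roots_power)
    ultimately show "p \<in> \<Union>(line t ` roots)"
      using point_in_line[OF assms] by blast
  qed
  then show "\<Union>(line t ` roots) = points"
    using assms line_subset_points by blast
next
  show "\<forall>B \<in> line t ` roots. \<forall>B' \<in> line t ` roots. B \<noteq> B' \<longrightarrow> B \<inter> B' = {}"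
    using assms lines_disjoint by blast
qed

lemma heffter_system_column_class: "heffter_system additive_group m points column_class"
  unfolding heffter_system_additive_group_iff column_class_def
proof (intro conjI)
  show "\<forall>B \<in> column ` {..<m}. B \<subseteq> points \<and> card B = m \<and> \<Sum>B = 0"
    using column_subset_points card_column sum_column by blast
next
  show "\<Union>(column ` {..<m}) = points"
    using column_subset_points by (auto simp: points_def column_def)
next
  show "\<forall>B \<in> column ` {..<m}. \<forall>B' \<in> column ` {..<m}. B \<noteq> B' \<longrightarrow> B \<inter> B' = {}"
    using columns_disjoint by blast
qed

lemma distinct_slopes: "distinct [1, x, inverse x]"
  using x_pow_eq_one_iff[of 1] x_pow_eq_one_iff[of 2] m_ge_3 x_nonzero
  by (auto simp: power2_eq_square field_simps dest: dvd_imp_le)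

definition parallel_class :: "nat \<Rightarrow> 'a set set" where
  "parallel_class k = (if k < 3 then line_class ([1, x, inverse x] ! k) else column_class)"

lemma class_slope_in_slopes: "k < 3 \<Longrightarrow> [1, x, inverse x] ! k \<in> slopes"
  using nth_mem[of k "[1, x, inverse x]"] by (simp add: slopes_def)

lemma heffter_system_parallel_class:
  "heffter_system additive_group m points (parallel_class k)"
  by (simp add: parallel_class_def class_slope_in_slopes heffter_system_line_class
      heffter_system_column_class)

lemma parallel_class_cases:
  assumes "B \<in> parallel_class k"
  obtains (line) \<zeta> where "k < 3" "\<zeta> \<in> roots" "B = line ([1, x, inverse x] ! k) \<zeta>"
    | (column) i where "\<not> k < 3" "i < m" "B = column i"
  using assms that by (auto simp: parallel_class_def line_class_def column_class_def split: if_splits)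

lemma card_Int_blocks_of_distinct_classes_le:
  assumes "k < 4" "k' < 4" "k \<noteq> k'" "B \<in> parallel_class k" "B' \<in> parallel_class k'"
  shows "card (B \<inter> B') \<le> 1"
proof -
  from assms(4) show ?thesis
  proof (cases rule: parallel_class_cases)
    case B: (line \<zeta>)
    from assms(5) show ?thesis
    proof (cases rule: parallel_class_cases)
      case B': (line \<eta>)
      then have "[1, x, inverse x] ! k \<noteq> [1, x, inverse x] ! k'"
        using B assms(3) distinct_slopes by (simp add: nth_eq_iff_index_eq)
      then show ?thesis
        using B B' class_slope_in_slopes card_line_Int_line_le by simp
    next
      case B': (column i)
      then show ?thesis
        using B class_slope_in_slopes card_line_Int_column_le by simp
    qed
  next
    case B: (column i)
    from assms(5) show ?thesis
    proof (cases rule: parallel_class_cases)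
      case B': (line \<eta>)
      then have "card (B' \<inter> B) \<le> 1"
        using B class_slope_in_slopes card_line_Int_column_le by simp
      then show ?thesis
        by (simp only: Int_commute)
    next
      case B': (column i')
      then show ?thesis
        using B assms(1-3) by simp
    qed
  qed
qed

lemma heffter_net_points: "heffter_net additive_group m 4 points parallel_class"
  unfolding heffter_net_def Coset.order_def
proof (intro conjI allI impI ballI)
  have block_card: "card B = m" if "B \<in> parallel_class k" for B k
    using that heffter_system_parallel_class[of k] by (simp add: heffter_system_def)
  show "comm_group additive_group"
    by (rule comm_group_additive_group)
  show "finite (carrier (additive_group :: 'a monoid))"
    by simp
  show "card (carrier (additive_group :: 'a monoid)) = 2 * m^2 + 1"
    by (simp add: card_field)
  show "half_set additive_group points"
    by (rule half_set_points)
  show "heffter_system additive_group m points (parallel_class k)" for k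
    by (rule heffter_system_parallel_class)
  show "parallel_class k \<inter> parallel_class k' = {}" if "k < 4" "k' < 4" "k \<noteq> k'" for k k'
  proof (rule equals0I)
    fix B
    assume B: "B \<in> parallel_class k \<inter> parallel_class k'"
    then have "card B \<le> 1"
      using card_Int_blocks_of_distinct_classes_le[OF that, of B B] by simp
    moreover have "card B = m"
      using B block_card by blast
    ultimately show False
      using m_ge_3 by simp
  qed
  fix B B'
  assume "B \<in> (\<Union>k<4. parallel_class k)" "B' \<in> (\<Union>k<4. parallel_class k)" "B \<noteq> B'"
  then obtain k k' where "k < 4" "k' < 4" "B \<in> parallel_class k" "B' \<in> parallel_class k'"
    by blast
  show "card (B \<inter> B') \<le> 1"
  proof (cases "k = k'")
    case True
    then have "B \<inter> B' = {}"
      using heffter_system_parallel_class[of k] \<open>B \<noteq> B'\<close> \<open>B \<in> parallel_class k\<close>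
        \<open>B' \<in> parallel_class k'\<close>
      unfolding heffter_system_def by blast
    then show ?thesis
      by simp
  next
    case False
    then show ?thesis
      using card_Int_blocks_of_distinct_classes_le \<open>k < 4\<close> \<open>k' < 4\<close>
        \<open>B \<in> parallel_class k\<close> \<open>B' \<in> parallel_class k'\<close> by blast
  qed
qed

end

theorem theorem5p1:
  fixes n :: nat and x :: "'a::{field,finite}" and y :: "nat \<Rightarrow> 'a"
  assumes "odd n"
    and "card (UNIV :: 'a set) = 18 * n^2 + 1"
    and "x ^ (3*n) = 1" and "\<forall>j. 0 < j \<and> j < 3*n \<longrightarrow> x ^ j \<noteq> 1"
    and "\<forall>i < 3*n. y i \<noteq> 0"
    and "bij_betw (\<lambda>i. (\<lambda>c. y i * c) ` nz_powers (3*n)) {..<3*n} (mult_cosets (nz_powers (3*n)))"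
    and "(\<Sum>i<3*n. y i) = 0"
    and "(\<Sum>i<3*n. x ^ i * y i) = 0"
    and "(\<Sum>i<3*n. inverse x ^ i * y i) = 0"
  shows "\<exists>(G :: 'a monoid) V Pc. heffter_net G (3*n) 4 V Pc"
proof -
  interpret heffter_net_construction "3*n" x y
  proof
    show "card (UNIV :: 'a set) = 2 * (3*n)^2 + 1"
      using assms(2) by (simp add: power_mult_distrib)
    show "\<exists>i<3*n. g \<in> (\<lambda>c. y i * c) ` nz_powers (3*n)" if "g \<noteq> 0" for g
      using mem_coset_of_representative[OF bij_betw_imp_surj_on[OF assms(6)] one_in_nz_powers that]
      by auto
  qed (use assms in auto)
  show ?thesis
    using heffter_net_points by blast
qed

end
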